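(* Let $H$ be an abelian subgroup of $\operatorname{Sym}_n$. Let $w_1,w_2,w_{1,1},w_{1,2},w_{1,3},w_{1,1}',w_{1,2}',w_{1,3}',w_{2,2},w_{2,1}',w_{2,2}',w_{2,3}'\in \mathrm{FM}_n$ be such that $$w_1=w_{1,1}w_{1,2}w_{1,3}=w_{1,1}'w_{1,2}'w_{1,3}',\qquad w_2=w_{1,1}'w_{2,2}w_{1,3}'=w_{2,1}'w_{2,2}'w_{2,3}',$$ and $\pi(w_{1,2})=\pi(w_{1,2}')=\pi(w_{2,2})=\pi(w_{2,2}')=z$. (i) If $w_{1,2}$ and $w_{1,2}'$ overlap in $w_1$, $w_{2,2}$ and $w_{2,2}'$ overlap in $w_2$, $|w_{1,3}|,|w_{2,3}'|<|w_{1,3}'|$ and $H_n=\{\mathrm{id}\}$, then $w_1=w_2$. (ii) If $w_{1,2}$ and $w_{1,2}'$ overlap in $w_1$, $w_{2,2}$ and $w_{2,2}'$ overlap in $w_2$, $|w_{1,1}|,|w_{2,1}'|<|w_{1,1}'|$ and $H_1=\{\mathrm{id}\}$, then $w_1=w_2$.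
   Context: $S=S_n(H)$ is the monoid with presentation $\langle a_1,\dots,a_n \mid a_1\cdots a_n = a_{\sigma(1)}\cdots a_{\sigma(n)},\ \sigma\in H\rangle$, and $z=a_1a_2\cdots a_n\in S$. $\mathrm{FM}_n=\langle x_1,\dots,x_n\rangle$ is the free monoid of rank $n$ and $\pi:\mathrm{FM}_n\to S$ is the monoid morphism with $\pi(x_i)=a_i$. $|w|$ is the length of a word $w$. $H_i=\{\sigma\in H\mid\sigma(i)=i\}$. Overlap: if $w=x_{i_1}\cdots x_{i_m}$ and $u=x_{i_p}\cdots x_{i_{p+r}}$, $v=x_{i_q}\cdots x_{i_{q+s}}$ are subwords at the indicated positions (here the positions are those determined by the given factorizations, e.g. $w_{1,2}$ occupies the positions after $w_{1,1}$ in $w_1$), then $u$ and $v$ overlap in $w$ if $p\leq q\leq p+r$ or $q\leq p\leq q+s$. *)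

theory Defs
  imports "HOL-Algebra.Sym_Groups"
begin

text \<open>Words in the free monoid FM_n: lists over the alphabet {1..n}; letter i stands for x_i.\<close>
definition FM :: "nat \<Rightarrow> nat list set" where
  "FM n = {w. set w \<subseteq> {1..n}}"

definition zword :: "nat \<Rightarrow> nat list" where
  "zword n = [1..<n+1]"

definition rel_step :: "nat \<Rightarrow> (nat \<Rightarrow> nat) set \<Rightarrow> nat list \<Rightarrow> nat list \<Rightarrow> bool" where
  "rel_step n H u v \<longleftrightarrow>
     (\<exists>a b \<sigma>. \<sigma> \<in> H \<and> u = a @ zword n @ b \<and> v = a @ map \<sigma> (zword n) @ b)"

text \<open>Equality in S_n(H) of the images: pi u = pi v (the monoid congruence generated by the relations).\<close>
definition S_eq :: "nat \<Rightarrow> (nat \<Rightarrow> nat) set \<Rightarrow> nat list \<Rightarrow> nat list \<Rightarrow> bool" where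
  "S_eq n H = equivclp (rel_step n H)"

text \<open>Subwords starting at (0-based) positions p and q, of lengths lu and lv, overlap.\<close>
definition overlap :: "nat \<Rightarrow> nat \<Rightarrow> nat \<Rightarrow> nat \<Rightarrow> bool" where
  "overlap p lu q lv \<longleftrightarrow> (p \<le> q \<and> q < p + lu) \<or> (q \<le> p \<and> p < q + lv)"

end

theory Submission
  imports Defs
begin

text \<open>A word equal to z in S_n(H) is a relabelling x_{sigma(1)}...x_{sigma(n)} of x_1...x_n with
  sigma in H, since no relation fits strictly inside a word of length n. Two such windows overlapping
  at offset d make one permutation a shift of the other: t(d + i) = s(i). In (i) the windows t and r
  of w1 and w2 sit right after the shared prefix w11', while the overlapping windows s and m both
  reach into the shared suffix w13', so a letter of s equals a letter of m. Commutativity of H carries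
  these equalities over to t(n) = r(n) (in (ii), symmetrically, t(1) = r(1)), and the trivial
  stabiliser of n (of 1) forces t = r, i.e. w1 = w2.\<close>

lemma length_zword [simp]: "length (zword n) = n"
  by (simp add: zword_def)

lemma nth_append_map_zword:
  assumes "0 < i" "i \<le> n"
  shows "(a @ map u (zword n) @ b) ! (length a + i - 1) = u i"
  using assms by (cases i) (simp_all add: nth_append zword_def del: upt_Suc)

lemma map_zword_shift:
  assumes "a @ map u (zword n) @ b = a' @ map v (zword n) @ b'"
    and "length a = length a' + d" "0 < i" "d + i \<le> n"
  shows "v (d + i) = u i"
proof -
  have "u i = (a @ map u (zword n) @ b) ! (length a + i - 1)"
    using assms(3,4) nth_append_map_zword[of i n a u b] by simp
  also have "\<dots> = (a' @ map v (zword n) @ b') ! (length a' + (d + i) - 1)"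
    using assms(1,2) by (simp add: add.assoc)
  also have "\<dots> = v (d + i)"
    using assms(3,4) nth_append_map_zword[of "d + i" n a' v b'] by simp
  finally show ?thesis ..
qed

lemma S_eq_zword_imp_map:
  assumes "subgroup H (sym_group n)" and "S_eq n H w (zword n)"
  shows "\<exists>\<sigma>\<in>H. w = map \<sigma> (zword n)"
proof -
  have id: "id \<in> H"
    using subgroup.one_closed[OF assms(1)] by (simp add: sym_group_one)
  have "(symclp (rel_step n H))\<^sup>*\<^sup>* (zword n) w"
    using equivclp_sym[OF assms(2)[unfolded S_eq_def]] by (simp add: equivclp_def)
  then show ?thesis
  proof (induction rule: rtranclp_induct)
    case base
    show ?case using id by force
  next
    case (step y x)
    then obtain \<sigma> where "\<sigma> \<in> H" "y = map \<sigma> (zword n)" by blast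
    then have "length y = n" by simp
    have no_context: "a = []" "b = []" if "y = a @ c @ b" "length c = n" for a b c :: "nat list"
      using arg_cong[OF that(1), of length] that(2) \<open>length y = n\<close> by simp_all
    from step(2) show ?case
    proof (cases rule: symclpE)
      case base
      then obtain a b \<tau> where "\<tau> \<in> H" "y = a @ zword n @ b" "x = a @ map \<tau> (zword n) @ b"
        unfolding rel_step_def by blast
      then show ?thesis using no_context[of a "zword n" b] by auto
    next
      case sym
      then obtain a b \<tau> where "y = a @ map \<tau> (zword n) @ b" "x = a @ zword n @ b"
        unfolding rel_step_def by blast
      then show ?thesis using no_context[of a "map \<tau> (zword n)" b] id by force
    qed
  qed
qed

lemma sym_subgroup_permutes:
  assumes "subgroup H (sym_group n)" "\<sigma> \<in> H"
  shows "\<sigma> permutes {1..n}"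
  using subgroup.subset[OF assms(1)] assms(2) by (auto simp: sym_group_carrier)

lemma sym_subgroup_eq_if_eq_at:
  assumes sub: "subgroup H (sym_group n)" and triv: "{\<sigma> \<in> H. \<sigma> k = k} = {id}"
    and "\<sigma> \<in> H" "\<tau> \<in> H" "\<sigma> k = \<tau> k"
  shows "\<sigma> = \<tau>"
proof -
  have "\<tau> permutes {1..n}"
    using sym_subgroup_permutes[OF sub \<open>\<tau> \<in> H\<close>] .
  have "inv' \<tau> \<in> H"
    using subgroup.m_inv_closed[OF sub \<open>\<tau> \<in> H\<close>] \<open>\<tau> permutes {1..n}\<close>
    by (simp add: sym_group_carrier)
  then have "inv' \<tau> \<circ> \<sigma> \<in> H"
    using subgroup.m_closed[OF sub _ \<open>\<sigma> \<in> H\<close>] by (simp add: sym_group_mult)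
  moreover have "(inv' \<tau> \<circ> \<sigma>) k = k"
    using \<open>\<sigma> k = \<tau> k\<close> permutes_inverses(2)[OF \<open>\<tau> permutes {1..n}\<close>] by simp
  ultimately have "inv' \<tau> \<circ> \<sigma> = id" using triv by blast
  then have "\<tau> \<circ> (inv' \<tau> \<circ> \<sigma>) = \<tau>" by simp
  then show ?thesis
    using permutes_inv_o(1)[OF \<open>\<tau> permutes {1..n}\<close>] by (simp add: o_assoc)
qed

lemma commuting_shift_transfer:
  fixes s t m :: "'a \<Rightarrow> 'a"
  assumes "s \<circ> t = t \<circ> s" "t \<circ> m = m \<circ> t" "m \<circ> s = s \<circ> m" "inj s"
    and "t y = s x" "m y = s k"
  shows "t k = m x"
proof -
  have "s (t k) = t (s k)" using fun_cong[OF assms(1)] by simp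
  also have "\<dots> = t (m y)" using assms(6) by simp
  also have "\<dots> = m (s x)" using assms(5) fun_cong[OF assms(2), of y] by simp
  also have "\<dots> = s (m x)" using fun_cong[OF assms(3), of x] by simp
  finally show ?thesis using \<open>inj s\<close> by (simp add: inj_eq)
qed

lemma suffix_overlap_windows_eq_ordered:
  assumes sub: "subgroup H (sym_group n)"
    and ab: "\<forall>\<sigma>\<in>H. \<forall>\<tau>\<in>H. \<sigma> \<circ> \<tau> = \<tau> \<circ> \<sigma>"
    and triv: "{\<sigma> \<in> H. \<sigma> n = n} = {id}"
    and H: "s \<in> H" "t \<in> H" "r \<in> H" "m \<in> H"
    and x: "a @ map s (zword n) @ a2 = c @ map t (zword n) @ b"
    and y: "a' @ map m (zword n) @ a2' = c @ map r (zword n) @ b"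
    and len: "length c < length a" "length a \<le> length a'" "length a' < length c + n"
  shows "t = r"
proof -
  define d e where "d = length a - length c" and "e = length a' - length c"
  have "0 < d" "d \<le> e" "e < n" and ld: "length a = length c + d" "length a' = length c + e"
    using len by (auto simp: d_def e_def)
  have "s n = m (d + (n - e))"
  proof -
    have "s n = (a @ map s (zword n) @ a2) ! (length a + n - 1)"
      using nth_append_map_zword[of n n a s a2] \<open>e < n\<close> by simp
    also have "\<dots> = ((c @ map t (zword n)) @ b) ! (length (c @ map t (zword n)) + (d - 1))"
      using x \<open>0 < d\<close> \<open>e < n\<close> by (simp add: d_def add.commute)
    also have "\<dots> = ((c @ map r (zword n)) @ b) ! (length (c @ map r (zword n)) + (d - 1))"
      by (simp only: nth_append_length_plus)
    also have "\<dots> = (a' @ map m (zword n) @ a2') ! (length a' + (d + (n - e)) - 1)"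
      using y \<open>0 < d\<close> \<open>d \<le> e\<close> \<open>e < n\<close> by (simp add: d_def e_def add.commute)
    also have "\<dots> = m (d + (n - e))"
      using nth_append_map_zword[of "d + (n - e)" n a' m a2'] \<open>0 < d\<close> \<open>d \<le> e\<close> \<open>e < n\<close> by simp
    finally show ?thesis .
  qed
  moreover have "t (d + (n - e)) = s (n - e)"
    using map_zword_shift[OF x ld(1), of "n - e"] \<open>d \<le> e\<close> \<open>e < n\<close> by simp
  ultimately have "t n = m (n - e)"
    using commuting_shift_transfer[of s t m] ab H sym_subgroup_permutes[OF sub H(1)]
    by (simp add: permutes_inj)
  also have "\<dots> = r n"
    using map_zword_shift[OF y ld(2), of "n - e"] \<open>e < n\<close> by simp
  finally show ?thesis using sym_subgroup_eq_if_eq_at[OF sub triv H(2,3)] by blast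
qed

lemma prefix_overlap_windows_eq_ordered:
  assumes sub: "subgroup H (sym_group n)"
    and ab: "\<forall>\<sigma>\<in>H. \<forall>\<tau>\<in>H. \<sigma> \<circ> \<tau> = \<tau> \<circ> \<sigma>"
    and triv: "{\<sigma> \<in> H. \<sigma> 1 = 1} = {id}"
    and H: "s \<in> H" "t \<in> H" "r \<in> H" "m \<in> H"
    and x: "a @ map s (zword n) @ a2 = c @ map t (zword n) @ b"
    and y: "a' @ map m (zword n) @ a2' = c @ map r (zword n) @ b"
    and len: "length a' \<le> length a" "length a < length c" "length c < length a' + n"
  shows "t = r"
proof -
  define d e where "d = length c - length a" and "e = length c - length a'"
  have "0 < d" "d \<le> e" "e < n" and ld: "length c = length a + d" "length c = length a' + e"
    using len by (auto simp: d_def e_def)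
  have "s 1 = m (e - d + 1)"
  proof -
    have "s 1 = (a @ map s (zword n) @ a2) ! (length a + 1 - 1)"
      using nth_append_map_zword[of 1 n a s a2] \<open>e < n\<close> by simp
    also have "\<dots> = c ! length a"
      using x len by (simp add: nth_append)
    also have "\<dots> = (a' @ map m (zword n) @ a2') ! (length a' + (e - d + 1) - 1)"
      using y len ld by (simp add: nth_append)
    also have "\<dots> = m (e - d + 1)"
      using nth_append_map_zword[of "e - d + 1" n a' m a2'] \<open>e < n\<close> by simp
    finally show ?thesis .
  qed
  moreover have "t (e - d + 1) = s (e + 1)"
    using map_zword_shift[OF x[symmetric] ld(1), of "e - d + 1"] \<open>d \<le> e\<close> \<open>e < n\<close> by simp
  ultimately have "t 1 = m (e + 1)"
    using commuting_shift_transfer[of s t m] ab H sym_subgroup_permutes[OF sub H(1)]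
    by (simp add: permutes_inj)
  also have "\<dots> = r 1"
    using map_zword_shift[OF y[symmetric] ld(2), of 1] \<open>e < n\<close> by simp
  finally show ?thesis using sym_subgroup_eq_if_eq_at[OF sub triv H(2,3)] by blast
qed

lemma suffix_overlap_windows_eq:
  assumes sub: "subgroup H (sym_group n)"
    and ab: "\<forall>\<sigma>\<in>H. \<forall>\<tau>\<in>H. \<sigma> \<circ> \<tau> = \<tau> \<circ> \<sigma>"
    and triv: "{\<sigma> \<in> H. \<sigma> n = n} = {id}"
    and H: "s \<in> H" "t \<in> H" "r \<in> H" "m \<in> H"
    and x: "a @ map s (zword n) @ a2 = c @ map t (zword n) @ b"
    and y: "a' @ map m (zword n) @ a2' = c @ map r (zword n) @ b"
    and len: "length c < length a" "length a < length c + n"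
      "length c < length a'" "length a' < length c + n"
  shows "t = r"
proof (cases "length a \<le> length a'")
  case True
  then show ?thesis using suffix_overlap_windows_eq_ordered[OF sub ab triv H x y] len by blast
next
  case False
  then show ?thesis
    using suffix_overlap_windows_eq_ordered[OF sub ab triv H(4,3,2,1) y x] len by simp
qed

lemma prefix_overlap_windows_eq:
  assumes sub: "subgroup H (sym_group n)"
    and ab: "\<forall>\<sigma>\<in>H. \<forall>\<tau>\<in>H. \<sigma> \<circ> \<tau> = \<tau> \<circ> \<sigma>"
    and triv: "{\<sigma> \<in> H. \<sigma> 1 = 1} = {id}"
    and H: "s \<in> H" "t \<in> H" "r \<in> H" "m \<in> H"
    and x: "a @ map s (zword n) @ a2 = c @ map t (zword n) @ b"
    and y: "a' @ map m (zword n) @ a2' = c @ map r (zword n) @ b"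
    and len: "length a < length c" "length c < length a + n"
      "length a' < length c" "length c < length a' + n"
  shows "t = r"
proof (cases "length a' \<le> length a")
  case True
  then show ?thesis using prefix_overlap_windows_eq_ordered[OF sub ab triv H x y] len by blast
next
  case False
  then show ?thesis
    using prefix_overlap_windows_eq_ordered[OF sub ab triv H(4,3,2,1) y x] len by simp
qed

theorem lemma2p1:
  fixes n :: nat and H :: "(nat \<Rightarrow> nat) set"
    and w1 w2 w11 w12 w13 w11' w12' w13' w22 w21' w22' w23' :: "nat list"
  assumes n: "n \<ge> 1"
    and H_sub: "subgroup H (sym_group n)"
    and H_ab: "\<forall>\<sigma>\<in>H. \<forall>\<tau>\<in>H. \<sigma> \<circ> \<tau> = \<tau> \<circ> \<sigma>"
    and FM: "w1 \<in> FM n" "w2 \<in> FM n" "w11 \<in> FM n" "w12 \<in> FM n" "w13 \<in> FM n"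
      "w11' \<in> FM n" "w12' \<in> FM n" "w13' \<in> FM n" "w22 \<in> FM n"
      "w21' \<in> FM n" "w22' \<in> FM n" "w23' \<in> FM n"
    and w1: "w1 = w11 @ w12 @ w13" "w1 = w11' @ w12' @ w13'"
    and w2: "w2 = w11' @ w22 @ w13'" "w2 = w21' @ w22' @ w23'"
    and z: "S_eq n H w12 (zword n)" "S_eq n H w12' (zword n)"
      "S_eq n H w22 (zword n)" "S_eq n H w22' (zword n)"
  shows "(overlap (length w11) (length w12) (length w11') (length w12')
            \<and> overlap (length w11') (length w22) (length w21') (length w22')
            \<and> length w13 < length w13' \<and> length w23' < length w13'
            \<and> {\<sigma> \<in> H. \<sigma> n = n} = {id}
          \<longrightarrow> w1 = w2)
       \<and> (overlap (length w11) (length w12) (length w11') (length w12')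
            \<and> overlap (length w11') (length w22) (length w21') (length w22')
            \<and> length w11 < length w11' \<and> length w21' < length w11'
            \<and> {\<sigma> \<in> H. \<sigma> 1 = 1} = {id}
          \<longrightarrow> w1 = w2)"
proof -
  obtain s where "s \<in> H" "w12 = map s (zword n)" using S_eq_zword_imp_map[OF H_sub z(1)] ..
  obtain t where "t \<in> H" "w12' = map t (zword n)" using S_eq_zword_imp_map[OF H_sub z(2)] ..
  obtain r where "r \<in> H" "w22 = map r (zword n)" using S_eq_zword_imp_map[OF H_sub z(3)] ..
  obtain m where "m \<in> H" "w22' = map m (zword n)" using S_eq_zword_imp_map[OF H_sub z(4)] ..
  note H = \<open>s \<in> H\<close> \<open>t \<in> H\<close> \<open>r \<in> H\<close> \<open>m \<in> H\<close>
  note windows = \<open>w12 = _\<close> \<open>w12' = _\<close> \<open>w22 = _\<close> \<open>w22' = _\<close>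
  have x: "w11 @ map s (zword n) @ w13 = w11' @ map t (zword n) @ w13'"
    and y: "w21' @ map m (zword n) @ w23' = w11' @ map r (zword n) @ w13'"
    using w1 w2 windows by simp_all
  have lengths: "length w11 + length w13 = length w11' + length w13'"
    "length w21' + length w23' = length w11' + length w13'"
    using arg_cong[OF x, of length] arg_cong[OF y, of length] by simp_all
  have same_window: "w1 = w2" if "t = r" using that w1 w2 windows by simp
  show ?thesis
  proof (intro conjI impI; elim conjE)
    assume "overlap (length w11) (length w12) (length w11') (length w12')"
      "overlap (length w11') (length w22) (length w21') (length w22')"
      "length w13 < length w13'" "length w23' < length w13'" and triv: "{\<sigma> \<in> H. \<sigma> n = n} = {id}"
    with lengths have "t = r"
      by (intro suffix_overlap_windows_eq[OF H_sub H_ab triv H x y]) (auto simp: overlap_def windows)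
    then show "w1 = w2" by (rule same_window)
  next
    assume "overlap (length w11) (length w12) (length w11') (length w12')"
      "overlap (length w11') (length w22) (length w21') (length w22')"
      "length w11 < length w11'" "length w21' < length w11'" and triv: "{\<sigma> \<in> H. \<sigma> 1 = 1} = {id}"
    then have "t = r"
      by (intro prefix_overlap_windows_eq[OF H_sub H_ab triv H x y]) (auto simp: overlap_def windows)
    then show "w1 = w2" by (rule same_window)
  qed
qed

end
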